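(* Let $d\ge1$ and let $\mathcal H\neq\{0\}$ be a Hilbert space which is continuously embedded in $\mathscr S'(\mathbb R^d)$, and such that for some constant $C_0\ge 1$, for every $f\in\mathcal H$ and $x,\xi\in\mathbb R^d$, $e^{i\langle\cdot,\xi\rangle}f(\cdot-x)\in\mathcal H$ and $\|e^{i\langle\cdot,\xi\rangle}f(\cdot-x)\|_{\mathcal H}\le C_0\|f\|_{\mathcal H}$. Then there is a norm $|||\cdot|||$ on $\mathcal H$ such that: (1) $|||\cdot|||$ is equivalent to $\|\cdot\|_{\mathcal H}$; (2) $|||\cdot|||$ is a Hilbert norm (i.e. it arises from a scalar product); (3) $|||e^{i\langle\cdot,\xi\rangle}f(\cdot-x)|||=|||f|||$ for every $f\in\mathcal H$ and $x,\xi\in\mathbb R^d$.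
   Context: $\mathscr S'(\mathbb R^d)$ denotes the space of tempered distributions; $\langle\cdot,\cdot\rangle$ is the standard inner product on $\mathbb R^d$. *)

theory Defs
  imports "HOL-Analysis.Analysis"
begin

text \<open>Test functions and distributions live on real^'d (d = CARD('d) \<ge> 1), complex valued.\<close>

type_synonym 'd testfun = "real^'d \<Rightarrow> complex"
type_synonym 'd distr = "'d testfun \<Rightarrow> complex"

fun iter_pd :: "'d::finite list \<Rightarrow> 'd testfun \<Rightarrow> 'd testfun" where
  "iter_pd [] f = f"
| "iter_pd (i # is) f = (\<lambda>x. frechet_derivative (iter_pd is f) (at x) (axis i 1))"

definition schwartz :: "('d::finite) testfun \<Rightarrow> bool" where
  "schwartz \<phi> \<longleftrightarrow>
     (\<forall>l x. iter_pd l \<phi> differentiable (at x)) \<and>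
     (\<forall>l (N::nat). bounded (range (\<lambda>x. (1 + norm x) ^ N * norm (iter_pd l \<phi> x))))"

definition schwartz_seminorm :: "nat \<Rightarrow> nat \<Rightarrow> ('d::finite) testfun \<Rightarrow> real" where
  "schwartz_seminorm k N \<phi> =
     (SUP p \<in> {l. length l \<le> k} \<times> UNIV. (1 + norm (snd p)) ^ N * norm (iter_pd (fst p) \<phi> (snd p)))"

text \<open>Tempered distributions: continuous linear functionals on the Schwartz space,
  represented extensionally (value 0 outside the Schwartz space).\<close>
definition tempered :: "('d::finite) distr \<Rightarrow> bool" where
  "tempered T \<longleftrightarrow>
     (\<forall>\<phi>. \<not> schwartz \<phi> \<longrightarrow> T \<phi> = 0) \<and>
     (\<forall>\<phi> \<psi>. schwartz \<phi> \<longrightarrow> schwartz \<psi> \<longrightarrow> T (\<lambda>x. \<phi> x + \<psi> x) = T \<phi> + T \<psi>) \<and>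
     (\<forall>c \<phi>. schwartz \<phi> \<longrightarrow> T (\<lambda>x. c * \<phi> x) = c * T \<phi>) \<and>
     (\<exists>C k N. \<forall>\<phi>. schwartz \<phi> \<longrightarrow> norm (T \<phi>) \<le> C * schwartz_seminorm k N \<phi>)"

text \<open>The time-frequency shift  f \<mapsto> e^{i<.,\<xi>>} f(. - x)  on distributions:
  <e^{i<.,\<xi>>} f(.-x), \<phi>> = <f, \<lambda>s. e^{i<s+x,\<xi>>} \<phi>(s+x)>.\<close>
definition tf_shift :: "real^'d \<Rightarrow> real^'d \<Rightarrow> ('d::finite) distr \<Rightarrow> 'd distr" where
  "tf_shift x \<xi> T = (\<lambda>\<phi>. if schwartz \<phi>
       then T (\<lambda>s. exp (\<i> * complex_of_real (inner (s + x) \<xi>)) * \<phi> (s + x)) else 0)"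

definition inner_product_on :: "'d distr set \<Rightarrow> ('d distr \<Rightarrow> 'd distr \<Rightarrow> complex) \<Rightarrow> bool" where
  "inner_product_on H ip \<longleftrightarrow>
     (\<forall>f\<in>H. \<forall>g\<in>H. \<forall>h\<in>H. ip (\<lambda>\<phi>. f \<phi> + g \<phi>) h = ip f h + ip g h) \<and>
     (\<forall>c. \<forall>f\<in>H. \<forall>g\<in>H. ip (\<lambda>\<phi>. c * f \<phi>) g = c * ip f g) \<and>
     (\<forall>f\<in>H. \<forall>g\<in>H. ip g f = cnj (ip f g)) \<and>
     (\<forall>f\<in>H. f \<noteq> (\<lambda>\<phi>. 0) \<longrightarrow> Re (ip f f) > 0)"

definition ip_norm :: "('d distr \<Rightarrow> 'd distr \<Rightarrow> complex) \<Rightarrow> 'd distr \<Rightarrow> real" where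
  "ip_norm ip f = sqrt (Re (ip f f))"

definition hilbert_space_on :: "'d distr set \<Rightarrow> ('d distr \<Rightarrow> 'd distr \<Rightarrow> complex) \<Rightarrow> bool" where
  "hilbert_space_on H ip \<longleftrightarrow>
     (\<lambda>\<phi>. 0) \<in> H \<and>
     (\<forall>f\<in>H. \<forall>g\<in>H. (\<lambda>\<phi>. f \<phi> + g \<phi>) \<in> H) \<and>
     (\<forall>c. \<forall>f\<in>H. (\<lambda>\<phi>. c * f \<phi>) \<in> H) \<and>
     inner_product_on H ip \<and>
     (\<forall>s::nat \<Rightarrow> 'd distr. (\<forall>n. s n \<in> H) \<longrightarrow>
        (\<forall>e>0. \<exists>M. \<forall>m\<ge>M. \<forall>n\<ge>M. ip_norm ip (\<lambda>\<phi>. s m \<phi> - s n \<phi>) < e) \<longrightarrow>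
        (\<exists>f\<in>H. (\<lambda>n. ip_norm ip (\<lambda>\<phi>. s n \<phi> - f \<phi>)) \<longlonglongrightarrow> 0))"

text \<open>Continuous embedding of (H, ip) into S' (weak-* topology; for a Banach space this is
  equivalent to continuity into the strong topology).\<close>
definition cont_embedded_S' :: "('d::finite) distr set \<Rightarrow> ('d distr \<Rightarrow> 'd distr \<Rightarrow> complex) \<Rightarrow> bool" where
  "cont_embedded_S' H ip \<longleftrightarrow>
     (\<forall>f\<in>H. tempered f) \<and>
     (\<forall>\<phi>. schwartz \<phi> \<longrightarrow> (\<exists>C. \<forall>f\<in>H. norm (f \<phi>) \<le> C * ip_norm ip f))"

end

theory Submission
  imports Defs
begin

text \<open>Average the inner product over the orbit of the time-frequency shifts:
  \<open>\<langle>f, g\<rangle>' = M\<^sub>z \<langle>\<pi>(z) f, \<pi>(z) g\<rangle>\<close>, where \<open>M\<close> is a translation invariant mean on bounded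
  functions on the abelian group \<open>\<real>\<^sup>d \<times> \<real>\<^sup>d\<close>. The uniform bound \<open>C\<^sub>0\<close> on the shifts (and on
  their inverses, which are shifts up to a unimodular phase) makes the new norm equivalent to
  the old one. Since \<open>\<pi>(z) \<pi>(w) = c \<pi>(z + w)\<close> with \<open>|c| = 1\<close>, the new norm of \<open>\<pi>(w) f\<close> is the
  mean of a translate of the function averaged for \<open>f\<close>, hence the same.
  The invariant mean is a cluster point, in the compact product of discs given by Tychonoff's
  theorem, of iterated Cesaro averages along finitely many directions.\<close>

section \<open>Schwartz functions under modulation and translation\<close>

definition plane_wave :: "real^'d \<Rightarrow> real^'d \<Rightarrow> complex" where
  "plane_wave \<xi> s = exp (\<i> * complex_of_real (inner s \<xi>))"

lemma norm_plane_wave [simp]: "norm (plane_wave \<xi> s) = 1"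
  unfolding plane_wave_def by simp

lemma has_derivative_plane_wave:
  fixes \<xi> s :: "real^'d::finite"
  shows "(plane_wave \<xi> has_derivative (\<lambda>v. plane_wave \<xi> s * (\<i> * complex_of_real (inner v \<xi>)))) (at s)"
proof -
  have "((\<lambda>s. \<i> * complex_of_real (inner s \<xi>)) has_derivative (\<lambda>v. \<i> * complex_of_real (inner v \<xi>))) (at s)"
    by (auto intro!: derivative_eq_intros)
  from has_derivative_compose[OF this DERIV_exp[THEN has_field_derivative_imp_has_derivative]]
  show ?thesis by (simp add: plane_wave_def[abs_def])
qed

definition pd_combination :: "('d::finite) testfun \<Rightarrow> (complex \<times> 'd list) list \<Rightarrow> 'd testfun" where
  "pd_combination \<phi> ps s = (\<Sum>p\<leftarrow>ps. fst p * iter_pd (snd p) \<phi> s)"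

lemma has_derivative_pd_combination:
  assumes "\<And>l x. iter_pd l \<phi> differentiable (at x)"
  shows "(pd_combination \<phi> ps has_derivative
          (\<lambda>v. \<Sum>p\<leftarrow>ps. fst p * frechet_derivative (iter_pd (snd p) \<phi>) (at s) v)) (at s)"
proof (induction ps)
  case Nil
  then show ?case by (simp add: pd_combination_def[abs_def])
next
  case (Cons p ps)
  have "((\<lambda>s. fst p * iter_pd (snd p) \<phi> s) has_derivative
     (\<lambda>v. fst p * frechet_derivative (iter_pd (snd p) \<phi>) (at s) v)) (at s)"
    using assms frechet_derivative_works has_derivative_mult_right by blast
  from has_derivative_add[OF this Cons.IH] show ?case
    by (simp add: pd_combination_def[abs_def])
qed

lemma iter_pd_plane_wave_mult:
  assumes diff: "\<And>l x. iter_pd l \<phi> differentiable (at x)"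
  shows "\<exists>ps. iter_pd l (\<lambda>s. plane_wave \<xi> s * \<phi> s) = (\<lambda>s. plane_wave \<xi> s * pd_combination \<phi> ps s)"
proof (induction l)
  case Nil
  show ?case by (rule exI[of _ "[(1, [])]"]) (simp add: pd_combination_def)
next
  case (Cons i l)
  then obtain ps where ps: "iter_pd l (\<lambda>s. plane_wave \<xi> s * \<phi> s) = (\<lambda>s. plane_wave \<xi> s * pd_combination \<phi> ps s)"
    by blast
  define ps' where "ps' = map (\<lambda>p. (fst p, i # snd p)) ps @
     map (\<lambda>p. (\<i> * complex_of_real (\<xi> $ i) * fst p, snd p)) ps"
  have "iter_pd (i # l) (\<lambda>s. plane_wave \<xi> s * \<phi> s) x = plane_wave \<xi> x * pd_combination \<phi> ps' x" for x
  proof -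
    have "((\<lambda>s. plane_wave \<xi> s * pd_combination \<phi> ps s) has_derivative
      (\<lambda>v. plane_wave \<xi> x * (\<Sum>p\<leftarrow>ps. fst p * frechet_derivative (iter_pd (snd p) \<phi>) (at x) v)
         + plane_wave \<xi> x * (\<i> * complex_of_real (inner v \<xi>)) * pd_combination \<phi> ps x)) (at x)"
      by (rule has_derivative_mult[OF has_derivative_plane_wave has_derivative_pd_combination[OF diff]])
    then have "iter_pd (i # l) (\<lambda>s. plane_wave \<xi> s * \<phi> s) x
        = plane_wave \<xi> x * (\<Sum>p\<leftarrow>ps. fst p * iter_pd (i # snd p) \<phi> x)
          + plane_wave \<xi> x * (\<i> * complex_of_real (\<xi> $ i)) * pd_combination \<phi> ps x"
      by (simp add: ps frechet_derivative_at[symmetric] inner_axis')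
    also have "\<dots> = plane_wave \<xi> x * pd_combination \<phi> ps' x"
      by (simp add: pd_combination_def ps'_def o_def sum_list_const_mult distrib_left mult.assoc)
    finally show ?thesis .
  qed
  then show ?case by blast
qed

lemma schwartz_decay:
  "schwartz \<phi> \<Longrightarrow> \<exists>B. \<forall>x. (1 + norm x) ^ N * norm (iter_pd l \<phi> x) \<le> B"
  unfolding schwartz_def bounded_iff by fastforce

lemma schwartzI:
  assumes "\<And>l x. iter_pd l \<phi> differentiable (at x)"
    and "\<And>l N. \<exists>B. \<forall>x. (1 + norm x) ^ N * norm (iter_pd l \<phi> x) \<le> B"
  shows "schwartz \<phi>"
  unfolding schwartz_def bounded_iff
proof (intro conjI allI)
  fix l N
  obtain B where "\<forall>x. (1 + norm x) ^ N * norm (iter_pd l \<phi> x) \<le> B"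
    using assms(2) by blast
  then show "\<exists>a. \<forall>y\<in>range (\<lambda>x. (1 + norm x) ^ N * norm (iter_pd l \<phi> x)). norm y \<le> a"
    by (intro exI[of _ B]) auto
qed (use assms(1) in auto)

lemma pd_combination_decay:
  assumes "schwartz \<phi>"
  shows "\<exists>B. \<forall>x. (1 + norm x) ^ N * norm (pd_combination \<phi> ps x) \<le> B"
proof (induction ps)
  case Nil
  then show ?case by (auto simp: pd_combination_def)
next
  case (Cons p ps)
  then obtain B where B: "\<forall>x. (1 + norm x) ^ N * norm (pd_combination \<phi> ps x) \<le> B"
    by blast
  obtain B' where B': "\<forall>x. (1 + norm x) ^ N * norm (iter_pd (snd p) \<phi> x) \<le> B'"
    using schwartz_decay[OF assms] by blast
  have "(1 + norm x) ^ N * norm (pd_combination \<phi> (p # ps) x) \<le> norm (fst p) * B' + B" for x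
  proof -
    have "norm (pd_combination \<phi> (p # ps) x)
        \<le> norm (fst p) * norm (iter_pd (snd p) \<phi> x) + norm (pd_combination \<phi> ps x)"
      by (simp add: pd_combination_def norm_mult[symmetric] norm_triangle_ineq)
    then have "(1 + norm x) ^ N * norm (pd_combination \<phi> (p # ps) x)
        \<le> (1 + norm x) ^ N * (norm (fst p) * norm (iter_pd (snd p) \<phi> x) + norm (pd_combination \<phi> ps x))"
      by (rule mult_left_mono) simp
    also have "\<dots> = norm (fst p) * ((1 + norm x) ^ N * norm (iter_pd (snd p) \<phi> x))
          + (1 + norm x) ^ N * norm (pd_combination \<phi> ps x)"
      by (simp add: algebra_simps)
    also have "\<dots> \<le> norm (fst p) * B' + B"
      using B B' by (intro add_mono mult_left_mono) auto
    finally show ?thesis .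
  qed
  then show ?case by blast
qed

lemma schwartz_plane_wave_mult:
  assumes "schwartz \<phi>"
  shows "schwartz (\<lambda>s. plane_wave \<xi> s * \<phi> s)"
proof (rule schwartzI)
  have diff: "\<And>l x. iter_pd l \<phi> differentiable (at x)"
    using assms schwartz_def by blast
  fix l
  obtain ps where ps: "iter_pd l (\<lambda>s. plane_wave \<xi> s * \<phi> s) = (\<lambda>s. plane_wave \<xi> s * pd_combination \<phi> ps s)"
    using iter_pd_plane_wave_mult[OF diff] by blast
  show "iter_pd l (\<lambda>s. plane_wave \<xi> s * \<phi> s) differentiable (at x)" for x
    unfolding ps
    using has_derivative_mult[OF has_derivative_plane_wave has_derivative_pd_combination[OF diff]]
    by (rule differentiableI)
  show "\<exists>B. \<forall>x. (1 + norm x) ^ N * norm (iter_pd l (\<lambda>s. plane_wave \<xi> s * \<phi> s) x) \<le> B" for N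
    unfolding ps using pd_combination_decay[OF assms] by (simp add: norm_mult)
qed

lemma has_derivative_translate:
  assumes "h differentiable (at (s + x))"
  shows "((\<lambda>s. h (s + x)) has_derivative frechet_derivative h (at (s + x))) (at s)"
proof -
  have "((\<lambda>s. s + x) has_derivative (\<lambda>v. v)) (at s)"
    by (auto intro!: derivative_eq_intros)
  from has_derivative_compose[OF this assms[unfolded frechet_derivative_works]]
  show ?thesis by simp
qed

lemma iter_pd_translate:
  assumes "\<And>l x. iter_pd l g differentiable (at x)"
  shows "iter_pd l (\<lambda>s. g (s + x)) = (\<lambda>s. iter_pd l g (s + x))"
proof (induction l)
  case (Cons i l)
  show ?case
    by (rule ext)
      (simp add: Cons.IH frechet_derivative_at[OF has_derivative_translate[OF assms], symmetric])
qed simp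

lemma one_plus_norm_le_mult: "1 + norm (y::'a::real_normed_vector) \<le> (1 + norm x) * (1 + norm (y + x))"
proof -
  have "norm y \<le> norm x + norm (y + x)"
    using norm_triangle_ineq4[of "y + x" x] by simp
  also have "\<dots> \<le> (1 + norm x) * (1 + norm (y + x)) - 1"
    by (simp add: algebra_simps)
  finally show ?thesis by simp
qed

lemma schwartz_translate:
  assumes "schwartz g"
  shows "schwartz (\<lambda>s. g (s + x))"
proof (rule schwartzI)
  have diff: "\<And>l x. iter_pd l g differentiable (at x)"
    using assms schwartz_def by blast
  fix l
  show "iter_pd l (\<lambda>s. g (s + x)) differentiable (at y)" for y
    unfolding iter_pd_translate[OF diff] using has_derivative_translate[OF diff] by (rule differentiableI)
  fix N
  obtain B where B: "\<forall>y. (1 + norm y) ^ N * norm (iter_pd l g y) \<le> B"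
    using schwartz_decay[OF assms] by blast
  have "(1 + norm y) ^ N * norm (iter_pd l g (y + x)) \<le> (1 + norm x) ^ N * B" for y
  proof -
    have weight: "(1 + norm y) ^ N \<le> (1 + norm x) ^ N * (1 + norm (y + x)) ^ N"
      unfolding power_mult_distrib[symmetric] by (intro power_mono one_plus_norm_le_mult) auto
    have "(1 + norm y) ^ N * norm (iter_pd l g (y + x))
        \<le> (1 + norm x) ^ N * ((1 + norm (y + x)) ^ N * norm (iter_pd l g (y + x)))"
      using mult_right_mono[OF weight norm_ge_zero] by (simp add: mult.assoc)
    also have "\<dots> \<le> (1 + norm x) ^ N * B"
      using B by (intro mult_left_mono) auto
    finally show ?thesis .
  qed
  then show "\<exists>B. \<forall>y. (1 + norm y) ^ N * norm (iter_pd l (\<lambda>s. g (s + x)) y) \<le> B"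
    unfolding iter_pd_translate[OF diff] by blast
qed

lemma schwartz_tf_shift_test:
  assumes "schwartz \<phi>"
  shows "schwartz (\<lambda>s. exp (\<i> * complex_of_real (inner (s + x) \<xi>)) * \<phi> (s + x))"
  using schwartz_translate[OF schwartz_plane_wave_mult[OF assms, of \<xi>], of x]
  by (simp add: plane_wave_def)

lemma tf_shift_add: "tf_shift x \<xi> (\<lambda>\<phi>. f \<phi> + g \<phi>) = (\<lambda>\<phi>. tf_shift x \<xi> f \<phi> + tf_shift x \<xi> g \<phi>)"
  by (auto simp: tf_shift_def fun_eq_iff)

lemma tf_shift_scale: "tf_shift x \<xi> (\<lambda>\<phi>. c * f \<phi>) = (\<lambda>\<phi>. c * tf_shift x \<xi> f \<phi>)"
  by (auto simp: tf_shift_def fun_eq_iff)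

lemma tf_shift_zero: "tempered f \<Longrightarrow> tf_shift 0 0 f = f"
  by (auto simp: tf_shift_def tempered_def fun_eq_iff)

lemma tf_shift_tf_shift:
  assumes "tempered f"
  shows "tf_shift x \<xi> (tf_shift y \<eta> f) =
    (\<lambda>\<phi>. exp (- (\<i> * complex_of_real (inner x \<eta>))) * tf_shift (x + y) (\<xi> + \<eta>) f \<phi>)"
proof
  fix \<phi> :: "'a testfun"
  let ?c = "exp (- (\<i> * complex_of_real (inner x \<eta>)))"
  let ?\<psi> = "\<lambda>s. exp (\<i> * complex_of_real (inner (s + x) \<xi>)) * \<phi> (s + x)"
  let ?\<chi> = "\<lambda>s. exp (\<i> * complex_of_real (inner (s + (x + y)) (\<xi> + \<eta>))) * \<phi> (s + (x + y))"
  show "tf_shift x \<xi> (tf_shift y \<eta> f) \<phi> = ?c * tf_shift (x + y) (\<xi> + \<eta>) f \<phi>"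
  proof (cases "schwartz \<phi>")
    case True
    have "exp (\<i> * complex_of_real (inner (s + y) \<eta>)) * ?\<psi> (s + y) = ?c * ?\<chi> s" for s
    proof -
      have "inner (s + y) \<eta> + inner (s + y + x) \<xi> = - inner x \<eta> + inner (s + (x + y)) (\<xi> + \<eta>)"
        by (simp add: inner_add_left inner_add_right)
      then have "\<i> * complex_of_real (inner (s + y) \<eta>) + \<i> * complex_of_real (inner (s + y + x) \<xi>)
          = - (\<i> * complex_of_real (inner x \<eta>)) + \<i> * complex_of_real (inner (s + (x + y)) (\<xi> + \<eta>))"
        by (metis distrib_left mult_minus_right of_real_add of_real_minus)
      then show ?thesis
        by (simp add: exp_add[symmetric] add_ac mult.assoc)
    qed
    then have "tf_shift x \<xi> (tf_shift y \<eta> f) \<phi> = f (\<lambda>s. ?c * ?\<chi> s)"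
      using True schwartz_tf_shift_test[OF True] by (simp add: tf_shift_def)
    also have "\<dots> = ?c * f ?\<chi>"
      using assms schwartz_tf_shift_test[OF True] by (simp add: tempered_def)
    also have "\<dots> = ?c * tf_shift (x + y) (\<xi> + \<eta>) f \<phi>"
      using True by (simp add: tf_shift_def)
    finally show ?thesis .
  qed (simp add: tf_shift_def)
qed

section \<open>An invariant mean on a real vector space\<close>

definition shift_average :: "'g::real_vector \<Rightarrow> nat \<Rightarrow> ('g \<Rightarrow> 'b::real_normed_vector) \<Rightarrow> 'g \<Rightarrow> 'b" where
  "shift_average w n u z = (1 / real n) *\<^sub>R (\<Sum>k<n. u (z + real k *\<^sub>R w))"

fun iterated_average :: "'g::real_vector list \<Rightarrow> nat \<Rightarrow> ('g \<Rightarrow> 'b::real_normed_vector) \<Rightarrow> 'g \<Rightarrow> 'b" where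
  "iterated_average [] n u = u"
| "iterated_average (w # ws) n u = shift_average w n (iterated_average ws n u)"

lemma iterated_average_add:
  "iterated_average ws n (\<lambda>z. u z + v z) = (\<lambda>z. iterated_average ws n u z + iterated_average ws n v z)"
  by (induction ws) (auto simp: shift_average_def sum.distrib scaleR_add_right fun_eq_iff)

lemma iterated_average_linear:
  assumes "bounded_linear h"
  shows "iterated_average ws n (\<lambda>z. h (u z)) = (\<lambda>z. h (iterated_average ws n u z))"
proof (induction ws)
  case (Cons w ws)
  interpret h: bounded_linear h by fact
  show ?case by (simp add: Cons.IH shift_average_def h.sum h.scaleR fun_eq_iff)
qed simp

lemma iterated_average_shift:
  "iterated_average ws n (\<lambda>z. u (z + w)) = (\<lambda>z. iterated_average ws n u (z + w))"
  by (induction ws) (auto simp: shift_average_def add_ac fun_eq_iff)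

lemma norm_shift_average_le:
  assumes "\<And>z. norm (u z) \<le> B" "0 \<le> B"
  shows "norm (shift_average w n u z) \<le> B"
proof (cases "n = 0")
  case False
  have "norm (\<Sum>k<n. u (z + real k *\<^sub>R w)) \<le> real n * B"
    using sum_norm_le[of "{..<n}" "\<lambda>k. u (z + real k *\<^sub>R w)" "\<lambda>_. B"] assms(1) by simp
  with False show ?thesis by (simp add: shift_average_def field_simps)
qed (use assms in \<open>simp add: shift_average_def\<close>)

lemma norm_iterated_average_le:
  assumes "\<And>z. norm (u z) \<le> B" "0 \<le> B"
  shows "norm (iterated_average ws n u z) \<le> B"
  using assms by (induction ws arbitrary: z) (auto intro!: norm_shift_average_le)

lemma iterated_average_ge:
  fixes u :: "'g::real_vector \<Rightarrow> real"
  assumes "\<And>z. a \<le> u z" "0 < n"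
  shows "a \<le> iterated_average ws n u z"
proof (induction ws arbitrary: z)
  case (Cons w ws)
  have "real n * a \<le> (\<Sum>k<n. iterated_average ws n u (z + real k *\<^sub>R w))"
    using sum_mono[of "{..<n}" "\<lambda>_. a"] Cons by simp
  with assms(2) show ?case by (simp add: shift_average_def field_simps)
qed (use assms in simp)

text \<open>Averaging once more in a direction \<open>w\<close> already in the list telescopes the
  difference with the \<open>w\<close>-shift down to two boundary terms.\<close>
lemma norm_iterated_average_shift_diff_le:
  assumes "w \<in> set ws" "0 < n" "\<And>z. norm (u z) \<le> B"
  shows "norm (iterated_average ws n (\<lambda>z. u (z + w)) z - iterated_average ws n u z) \<le> 2 * B / real n"
  using assms(1)
proof (induction ws arbitrary: z)
  case (Cons w' ws)
  have B: "0 \<le> B" using assms(3)[of 0] norm_ge_zero order_trans by blast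
  show ?case
  proof (cases "w' = w")
    case True
    define v where "v = iterated_average ws n u"
    have v_le: "norm (v y) \<le> B" for y
      unfolding v_def by (rule norm_iterated_average_le[OF assms(3) B])
    have "iterated_average (w' # ws) n (\<lambda>z. u (z + w)) z - iterated_average (w' # ws) n u z
       = (1 / real n) *\<^sub>R (\<Sum>k<n. v (z + real (Suc k) *\<^sub>R w) - v (z + real k *\<^sub>R w))"
      by (simp add: True iterated_average_shift shift_average_def v_def sum_subtractf
          scaleR_diff_right scaleR_add_left add_ac)
    also have "\<dots> = (1 / real n) *\<^sub>R (v (z + real n *\<^sub>R w) - v z)"
      by (subst sum_lessThan_telescope) simp
    finally have "norm (iterated_average (w' # ws) n (\<lambda>z. u (z + w)) z - iterated_average (w' # ws) n u z)
        = norm (v (z + real n *\<^sub>R w) - v z) / real n"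
      by simp
    also have "\<dots> \<le> 2 * B / real n"
      using norm_triangle_le_diff[OF add_mono[OF v_le v_le]] assms(2)
      by (simp add: divide_right_mono)
    finally show ?thesis .
  next
    case False
    then have "w \<in> set ws" using Cons.prems by simp
    have "iterated_average (w' # ws) n (\<lambda>z. u (z + w)) z - iterated_average (w' # ws) n u z
        = shift_average w' n (\<lambda>y. iterated_average ws n (\<lambda>z. u (z + w)) y - iterated_average ws n u y) z"
      by (simp add: shift_average_def sum_subtractf scaleR_diff_right)
    also have "norm \<dots> \<le> 2 * B / real n"
      by (rule norm_shift_average_le) (use Cons.IH[OF \<open>w \<in> set ws\<close>] B assms(2) in auto)
    finally show ?thesis .
  qed
qed simp

definition average_index_filter :: "('g list \<times> nat) filter" where
  "average_index_filter = (INF i. principal {j. set (fst i) \<subseteq> set (fst j) \<and> snd i \<le> snd j})"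

lemma eventually_average_index_filter:
  "eventually P average_index_filter \<longleftrightarrow>
     (\<exists>i. \<forall>j. set (fst i) \<subseteq> set (fst j) \<and> snd i \<le> snd j \<longrightarrow> P j)"
  unfolding average_index_filter_def
proof (subst eventually_INF_base)
  fix i i' :: "'g list \<times> nat"
  show "\<exists>j\<in>UNIV. principal {k. set (fst j) \<subseteq> set (fst k) \<and> snd j \<le> snd k}
      \<le> inf (principal {k. set (fst i) \<subseteq> set (fst k) \<and> snd i \<le> snd k})
            (principal {k. set (fst i') \<subseteq> set (fst k) \<and> snd i' \<le> snd k})"
    by (rule bexI[of _ "(fst i @ fst i', max (snd i) (snd i'))"]) auto
  show "(\<exists>i\<in>UNIV. eventually P (principal {j. set (fst i) \<subseteq> set (fst j) \<and> snd i \<le> snd j}))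
      \<longleftrightarrow> (\<exists>i. \<forall>j. set (fst i) \<subseteq> set (fst j) \<and> snd i \<le> snd j \<longrightarrow> P j)"
    by (simp add: eventually_principal)
qed auto

lemma average_index_filter_neq_bot: "average_index_filter \<noteq> bot"
  unfolding trivial_limit_def eventually_average_index_filter by auto

lemma eventually_average_index:
  "eventually (\<lambda>i. w \<in> set (fst i) \<and> N \<le> snd i) average_index_filter"
  unfolding eventually_average_index_filter by (intro exI[of _ "([w], N)"]) auto

text \<open>Unbounded functions are sent to \<open>0\<close>, so that all averaging functionals lie in one
  compact product of discs.\<close>
definition averaging_functional :: "'g list \<times> nat \<Rightarrow> ('g::real_vector \<Rightarrow> complex) \<Rightarrow> complex" where
  "averaging_functional i u =
     (if bounded (range u) then iterated_average (fst i) (snd i) u 0 else 0)"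

definition sup_norm :: "('g \<Rightarrow> complex) \<Rightarrow> real" where
  "sup_norm u = (if bounded (range u) then (SUP z. norm (u z)) else 0)"

lemma compact_averaging_functionals:
  "compact {M :: ('g \<Rightarrow> complex) \<Rightarrow> complex. \<forall>u. norm (M u) \<le> sup_norm u}"
proof -
  let ?K = "PiE UNIV (\<lambda>u :: 'g \<Rightarrow> complex. cball (0::complex) (sup_norm u))"
  have "compactin (product_topology (\<lambda>_. euclidean) UNIV) ?K"
    by (auto simp: compactin_PiE)
  moreover have "?K = {M. \<forall>u. norm (M u) \<le> sup_norm u}"
    by (auto simp: PiE_def Pi_def)
  ultimately show ?thesis
    by (simp add: euclidean_product_topology)
qed

definition invariant_mean :: "('g::real_vector \<Rightarrow> complex) \<Rightarrow> complex" where
  "invariant_mean =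
     (SOME M. inf (nhds M) (filtermap averaging_functional average_index_filter) \<noteq> bot)"

lemma norm_averaging_functional_le: "norm (averaging_functional i u) \<le> sup_norm u"
proof (cases "bounded (range u)")
  case True
  then have "bdd_above (range (\<lambda>z. norm (u z)))"
    by (auto simp: bounded_iff bdd_above_def)
  then have "norm (u z) \<le> (SUP z. norm (u z))" for z
    by (rule cSUP_upper[OF UNIV_I])
  moreover from this have "0 \<le> (SUP z. norm (u z))"
    using norm_ge_zero order_trans by blast
  ultimately show ?thesis
    using True by (simp add: averaging_functional_def sup_norm_def norm_iterated_average_le)
qed (simp add: averaging_functional_def sup_norm_def)

lemma invariant_mean_cluster_point:
  "inf (nhds (invariant_mean :: ('g::real_vector \<Rightarrow> complex) \<Rightarrow> complex))
     (filtermap averaging_functional average_index_filter) \<noteq> bot"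
proof -
  have "filtermap averaging_functional average_index_filter \<noteq> bot"
    by (simp add: filtermap_bot_iff average_index_filter_neq_bot)
  moreover have "eventually (\<lambda>M. M \<in> {M. \<forall>u. norm (M u) \<le> sup_norm u})
      (filtermap averaging_functional average_index_filter)"
    by (simp add: eventually_filtermap norm_averaging_functional_le)
  ultimately have "\<exists>M. inf (nhds M) (filtermap averaging_functional average_index_filter) \<noteq> bot"
    using compact_averaging_functionals[unfolded compact_filter] by blast
  then show ?thesis
    unfolding invariant_mean_def by (rule someI_ex)
qed

lemma invariant_mean_in_closed:
  fixes S :: "(('g::real_vector \<Rightarrow> complex) \<Rightarrow> complex) set"
  assumes "closed S" "eventually (\<lambda>i. averaging_functional i \<in> S) average_index_filter"
  shows "invariant_mean \<in> S"
proof (rule ccontr)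
  assume "invariant_mean \<notin> S"
  then have "eventually (\<lambda>M. M \<in> - S) (nhds invariant_mean)"
    using assms(1) by (intro eventually_nhds_in_open) auto
  moreover have "eventually (\<lambda>M. M \<in> S) (filtermap averaging_functional average_index_filter)"
    using assms(2) by (simp add: eventually_filtermap)
  ultimately have "eventually (\<lambda>M. M \<in> - S \<and> M \<in> S)
      (inf (nhds invariant_mean) (filtermap averaging_functional average_index_filter))"
    by (intro eventually_conj filter_leD[OF inf_le1] filter_leD[OF inf_le2])
  with invariant_mean_cluster_point[where 'g='g] show False
    by (simp add: trivial_limit_def)
qed

lemma invariant_mean_add:
  assumes "bounded (range u)" "bounded (range v)"
  shows "invariant_mean (\<lambda>z. u z + v z) = invariant_mean u + invariant_mean v"
proof -
  have "bounded (range (\<lambda>z. u z + v z))"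
    using assms by (rule bounded_plus_comp)
  with assms have "invariant_mean \<in> {M. M (\<lambda>z. u z + v z) = M u + M v}"
    by (intro invariant_mean_in_closed closed_Collect_eq continuous_intros always_eventually)
      (auto simp: averaging_functional_def iterated_average_add)
  then show ?thesis by simp
qed

lemma invariant_mean_linear:
  assumes "bounded (range u)" "bounded_linear h"
  shows "invariant_mean (\<lambda>z. h (u z)) = h (invariant_mean u)"
proof -
  have "bounded (range (\<lambda>z. h (u z)))"
    using bounded_linear_image[OF assms] by (simp add: image_image)
  with assms have "invariant_mean \<in> {M. M (\<lambda>z. h (u z)) = h (M u)}"
    by (intro invariant_mean_in_closed closed_Collect_eq continuous_intros always_eventually
        continuous_on_compose2[OF linear_continuous_on[OF assms(2)]])
      (auto simp: averaging_functional_def iterated_average_linear linear_simps(3)[OF assms(2)])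
  then show ?thesis by simp
qed

lemma invariant_mean_Re_ge:
  fixes u :: "'g::real_vector \<Rightarrow> complex"
  assumes "bounded (range u)" "\<And>z. a \<le> Re (u z)"
  shows "a \<le> Re (invariant_mean u)"
proof -
  have "eventually (\<lambda>i::'g list \<times> nat. 0 < snd i) average_index_filter"
    using eventually_average_index[of 0 1] by (rule eventually_mono) auto
  then have "eventually (\<lambda>i. averaging_functional i \<in> {M. a \<le> Re (M u)}) average_index_filter"
    by (rule eventually_mono)
      (use iterated_average_ge[of a "\<lambda>z. Re (u z)"] assms in
        \<open>auto simp: averaging_functional_def iterated_average_linear[OF bounded_linear_Re]\<close>)
  then have "invariant_mean \<in> {M. a \<le> Re (M u)}"
    by (intro invariant_mean_in_closed closed_Collect_le continuous_intros
        continuous_on_product_coordinates)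
  then show ?thesis by simp
qed

lemma invariant_mean_Re_le:
  assumes "bounded (range u)" "\<And>z. Re (u z) \<le> b"
  shows "Re (invariant_mean u) \<le> b"
  using invariant_mean_Re_ge[of "\<lambda>z. - u z" "- b"] assms
    invariant_mean_linear[OF assms(1) bounded_linear_minus[OF bounded_linear_ident]]
  by (simp add: bounded_minus_comp)

lemma invariant_mean_shift:
  assumes "bounded (range u)"
  shows "invariant_mean (\<lambda>z. u (z + w)) = invariant_mean u"
proof -
  obtain B where B: "\<And>z. norm (u z) \<le> B"
    using assms by (auto simp: bounded_iff)
  have B0: "0 \<le> B"
    using B[of 0] norm_ge_zero order_trans by blast
  have shifted: "bounded (range (\<lambda>z. u (z + w)))"
    using B by (auto simp: bounded_iff)
  have "norm (invariant_mean (\<lambda>z. u (z + w)) - invariant_mean u) \<le> 0 + e" if "0 < e" for e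
  proof -
    obtain N :: nat where "max 1 (2 * B / e) < N"
      using reals_Archimedean2 by blast
    then have "0 < real N" "2 * B / e < N"
      by auto
    with \<open>0 < e\<close> have N: "0 < N" "2 * B / real N \<le> e"
      by (auto simp: field_simps)
    have "eventually (\<lambda>i. averaging_functional i \<in> {M. norm (M (\<lambda>z. u (z + w)) - M u) \<le> e})
        average_index_filter"
      using eventually_average_index[of w N]
    proof (rule eventually_mono, clarsimp simp: averaging_functional_def assms shifted)
      fix ws n assume "w \<in> set ws" "N \<le> n"
      then have "norm (iterated_average ws n (\<lambda>z. u (z + w)) 0 - iterated_average ws n u 0)
          \<le> 2 * B / real n"
        using N by (intro norm_iterated_average_shift_diff_le B) auto
      also have "\<dots> \<le> 2 * B / real N"
        using N \<open>N \<le> n\<close> B0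
        by (intro divide_left_mono) auto
      finally show "norm (iterated_average ws n (\<lambda>z. u (z + w)) 0 - iterated_average ws n u 0) \<le> e"
        using N by linarith
    qed
    then have "invariant_mean \<in> {M. norm (M (\<lambda>z. u (z + w)) - M u) \<le> e}"
      by (intro invariant_mean_in_closed closed_Collect_le continuous_intros
          continuous_on_product_coordinates)
    then show ?thesis by simp
  qed
  then show ?thesis
    using field_le_epsilon[of "norm (invariant_mean (\<lambda>z. u (z + w)) - invariant_mean u)" 0] by simp
qed

lemma
  assumes "inner_product_on H ip"
  shows inner_product_on_add_left:
      "f \<in> H \<Longrightarrow> g \<in> H \<Longrightarrow> h \<in> H \<Longrightarrow> ip (\<lambda>\<phi>. f \<phi> + g \<phi>) h = ip f h + ip g h"
    and inner_product_on_scale_left: "f \<in> H \<Longrightarrow> g \<in> H \<Longrightarrow> ip (\<lambda>\<phi>. c * f \<phi>) g = c * ip f g"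
    and inner_product_on_commute: "f \<in> H \<Longrightarrow> g \<in> H \<Longrightarrow> ip g f = cnj (ip f g)"
    and inner_product_on_pos: "f \<in> H \<Longrightarrow> f \<noteq> (\<lambda>\<phi>. 0) \<Longrightarrow> 0 < Re (ip f f)"
  using assms unfolding inner_product_on_def by blast+

lemma inner_product_on_Re_nonneg:
  assumes "inner_product_on H ip" "(\<lambda>\<phi>. 0) \<in> H" "h \<in> H"
  shows "0 \<le> Re (ip h h)"
proof (cases "h = (\<lambda>\<phi>. 0)")
  case True
  then show ?thesis
    using inner_product_on_add_left[OF assms(1,2,2,3)] by simp
next
  case False
  with assms show ?thesis
    using inner_product_on_pos[OF assms(1,3)] by fastforce
qed

lemma ip_norm_square:
  assumes "inner_product_on H ip" "(\<lambda>\<phi>. 0) \<in> H" "h \<in> H"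
  shows "(ip_norm ip h)\<^sup>2 = Re (ip h h)"
  using inner_product_on_Re_nonneg[OF assms] by (simp add: ip_norm_def)

lemma inner_product_on_diagonal_real:
  assumes "inner_product_on H ip" "g \<in> H"
  shows "cnj (ip g g) = ip g g"
  using inner_product_on_commute[OF assms(1,2,2)] by simp

lemma inner_product_on_add_scale:
  assumes ip: "inner_product_on H ip" and a: "a \<in> H" and b: "b \<in> H"
    and cb: "(\<lambda>\<phi>. c * b \<phi>) \<in> H" and s: "(\<lambda>\<phi>. a \<phi> + c * b \<phi>) \<in> H"
  shows "ip (\<lambda>\<phi>. a \<phi> + c * b \<phi>) (\<lambda>\<phi>. a \<phi> + c * b \<phi>)
    = ip a a + cnj c * ip a b + c * cnj (ip a b) + c * cnj c * ip b b"
    (is "ip ?s ?s = _")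
proof -
  have left: "ip ?s h = ip a h + c * ip b h" if "h \<in> H" for h
    using inner_product_on_add_left[OF ip a cb that] inner_product_on_scale_left[OF ip b that]
    by simp
  have "ip ?s ?s = cnj (ip ?s a) + c * cnj (ip ?s b)"
    using left[OF s] inner_product_on_commute[OF ip a s] inner_product_on_commute[OF ip b s] by simp
  also have "\<dots> = cnj (ip a a + c * cnj (ip a b)) + c * cnj (ip a b + c * ip b b)"
    using left[OF a] left[OF b] inner_product_on_commute[OF ip a b] by simp
  finally show ?thesis
    using inner_product_on_diagonal_real[OF ip a] inner_product_on_diagonal_real[OF ip b]
    by (simp add: algebra_simps)
qed

lemma norm_inner_product_on_le:
  assumes ip: "inner_product_on H ip" and zero: "(\<lambda>\<phi>. 0) \<in> H"
    and add: "\<And>f g. f \<in> H \<Longrightarrow> g \<in> H \<Longrightarrow> (\<lambda>\<phi>. f \<phi> + g \<phi>) \<in> H"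
    and scale: "\<And>c f. f \<in> H \<Longrightarrow> (\<lambda>\<phi>. c * f \<phi>) \<in> H"
    and a: "a \<in> H" and b: "b \<in> H"
  shows "norm (ip a b) \<le> Re (ip a a) + Re (ip b b)"
proof -
  define w where "w = ip a b"
  have "0 \<le> Re (ip a a) + Re (ip b b) + 2 * Re (c * cnj w)" if "norm c = 1" for c
  proof -
    have "c * cnj c = 1"
      using complex_norm_square[of c] that by simp
    moreover have "Re (cnj c * w) = Re (c * cnj w)"
      by simp
    moreover have "0 \<le> Re (ip (\<lambda>\<phi>. a \<phi> + c * b \<phi>) (\<lambda>\<phi>. a \<phi> + c * b \<phi>))"
      using a b by (intro inner_product_on_Re_nonneg[OF ip zero] add scale)
    ultimately show ?thesis
      using inner_product_on_add_scale[OF ip a b scale[OF b] add[OF a scale[OF b]]]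
      by (simp add: w_def)
  qed
  from this[of 1] this[of "-1"] this[of "\<i>"] this[of "-\<i>"]
  have "\<bar>Re w\<bar> * 2 \<le> Re (ip a a) + Re (ip b b)" "\<bar>Im w\<bar> * 2 \<le> Re (ip a a) + Re (ip b b)"
    by auto
  with cmod_le[of w] show ?thesis
    unfolding w_def by linarith
qed

lemma inner_product_on_unimodular_scale:
  assumes ip: "inner_product_on H ip" and f: "f \<in> H" and cf: "(\<lambda>\<phi>. c * f \<phi>) \<in> H"
    and "norm c = 1"
  shows "ip (\<lambda>\<phi>. c * f \<phi>) (\<lambda>\<phi>. c * f \<phi>) = ip f f"
proof -
  have "ip (\<lambda>\<phi>. c * f \<phi>) (\<lambda>\<phi>. c * f \<phi>) = c * cnj (ip (\<lambda>\<phi>. c * f \<phi>) f)"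
    using inner_product_on_scale_left[OF ip f cf] inner_product_on_commute[OF ip cf f] by simp
  also have "\<dots> = c * cnj c * cnj (ip f f)"
    using inner_product_on_scale_left[OF ip f f] by simp
  also have "\<dots> = ip f f"
    using complex_norm_square[of c] \<open>norm c = 1\<close> inner_product_on_diagonal_real[OF ip f] by simp
  finally show ?thesis .
qed

lemma ip_norm_nonneg:
  assumes "inner_product_on H ip" "(\<lambda>\<phi>. 0) \<in> H" "h \<in> H"
  shows "0 \<le> ip_norm ip h"
  using inner_product_on_Re_nonneg[OF assms] by (simp add: ip_norm_def)

section \<open>Averaging an inner product over a bounded projective representation\<close>

definition orbit_mean_ip ::
    "('g::real_vector \<Rightarrow> 'd distr \<Rightarrow> 'd distr) \<Rightarrow> ('d distr \<Rightarrow> 'd distr \<Rightarrow> complex) \<Rightarrow>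
     'd distr \<Rightarrow> 'd distr \<Rightarrow> complex" where
  "orbit_mean_ip T ip f g = invariant_mean (\<lambda>z. ip (T z f) (T z g))"

locale bounded_projective_representation =
  fixes H :: "('d::finite) distr set" and ip :: "'d distr \<Rightarrow> 'd distr \<Rightarrow> complex"
    and T :: "'g::real_vector \<Rightarrow> 'd distr \<Rightarrow> 'd distr" and \<sigma> :: "'g \<Rightarrow> 'g \<Rightarrow> complex"
    and C :: real
  assumes zero_in_H: "(\<lambda>\<phi>. 0) \<in> H"
    and add_in_H: "f \<in> H \<Longrightarrow> g \<in> H \<Longrightarrow> (\<lambda>\<phi>. f \<phi> + g \<phi>) \<in> H"
    and scale_in_H: "f \<in> H \<Longrightarrow> (\<lambda>\<phi>. c * f \<phi>) \<in> H"
    and inner_product: "inner_product_on H ip"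
    and T_in_H: "f \<in> H \<Longrightarrow> T z f \<in> H"
    and T_add: "f \<in> H \<Longrightarrow> g \<in> H \<Longrightarrow> T z (\<lambda>\<phi>. f \<phi> + g \<phi>) = (\<lambda>\<phi>. T z f \<phi> + T z g \<phi>)"
    and T_scale: "f \<in> H \<Longrightarrow> T z (\<lambda>\<phi>. c * f \<phi>) = (\<lambda>\<phi>. c * T z f \<phi>)"
    and T_zero: "f \<in> H \<Longrightarrow> T 0 f = f"
    and T_compose: "f \<in> H \<Longrightarrow> T z (T w f) = (\<lambda>\<phi>. \<sigma> z w * T (z + w) f \<phi>)"
    and norm_\<sigma>: "norm (\<sigma> z w) = 1"
    and C_pos: "0 < C"
    and ip_norm_T_le: "f \<in> H \<Longrightarrow> ip_norm ip (T z f) \<le> C * ip_norm ip f"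
begin

lemma ip_norm_le_T:
  assumes f: "f \<in> H"
  shows "ip_norm ip f \<le> C * ip_norm ip (T z f)"
proof -
  have "T (- z) (T z f) = (\<lambda>\<phi>. \<sigma> (- z) z * f \<phi>)"
    using T_compose[OF f] T_zero[OF f] by simp
  then have "ip_norm ip f = ip_norm ip (T (- z) (T z f))"
    using inner_product_on_unimodular_scale[OF inner_product f scale_in_H[OF f] norm_\<sigma>]
    by (simp add: ip_norm_def)
  also have "\<dots> \<le> C * ip_norm ip (T z f)"
    by (rule ip_norm_T_le[OF T_in_H[OF f]])
  finally show ?thesis .
qed

lemma Re_ip_T_bounds:
  assumes f: "f \<in> H"
  shows "(ip_norm ip f / C)\<^sup>2 \<le> Re (ip (T z f) (T z f))"
    and "Re (ip (T z f) (T z f)) \<le> (C * ip_norm ip f)\<^sup>2"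
proof -
  have nonneg: "0 \<le> ip_norm ip f" "0 \<le> ip_norm ip (T z f)"
    using f T_in_H by (simp_all add: ip_norm_nonneg[OF inner_product zero_in_H])
  have square: "Re (ip (T z f) (T z f)) = (ip_norm ip (T z f))\<^sup>2"
    using ip_norm_square[OF inner_product zero_in_H T_in_H[OF f]] by simp
  show "(ip_norm ip f / C)\<^sup>2 \<le> Re (ip (T z f) (T z f))"
    unfolding square using ip_norm_le_T[OF f, of z] C_pos nonneg
    by (intro power_mono) (simp_all add: field_simps)
  show "Re (ip (T z f) (T z f)) \<le> (C * ip_norm ip f)\<^sup>2"
    unfolding square using ip_norm_T_le[OF f, of z] nonneg by (intro power_mono)
qed

lemma bounded_orbit_ip:
  assumes f: "f \<in> H" and g: "g \<in> H"
  shows "bounded (range (\<lambda>z. ip (T z f) (T z g)))"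
  unfolding bounded_iff
proof (intro exI ballI, clarify)
  fix z
  have "norm (ip (T z f) (T z g)) \<le> Re (ip (T z f) (T z f)) + Re (ip (T z g) (T z g))"
    by (intro norm_inner_product_on_le[OF inner_product zero_in_H add_in_H scale_in_H] T_in_H f g)
  also have "\<dots> \<le> (C * ip_norm ip f)\<^sup>2 + (C * ip_norm ip g)\<^sup>2"
    by (intro add_mono Re_ip_T_bounds f g)
  finally show "norm (ip (T z f) (T z g)) \<le> (C * ip_norm ip f)\<^sup>2 + (C * ip_norm ip g)\<^sup>2" .
qed

lemma inner_product_on_orbit_mean_ip: "inner_product_on H (orbit_mean_ip T ip)"
  unfolding inner_product_on_def
proof (intro conjI ballI allI impI)
  fix f g h assume f: "f \<in> H" and g: "g \<in> H" and h: "h \<in> H"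
  show "orbit_mean_ip T ip (\<lambda>\<phi>. f \<phi> + g \<phi>) h = orbit_mean_ip T ip f h + orbit_mean_ip T ip g h"
    using invariant_mean_add[OF bounded_orbit_ip[OF f h] bounded_orbit_ip[OF g h]]
    by (simp add: orbit_mean_ip_def T_add f g T_in_H inner_product_on_add_left[OF inner_product] h)
next
  fix c f g assume f: "f \<in> H" and g: "g \<in> H"
  show "orbit_mean_ip T ip (\<lambda>\<phi>. c * f \<phi>) g = c * orbit_mean_ip T ip f g"
    using invariant_mean_linear[OF bounded_orbit_ip[OF f g] bounded_linear_mult_right]
    by (simp add: orbit_mean_ip_def T_scale f g T_in_H inner_product_on_scale_left[OF inner_product])
next
  fix f g assume f: "f \<in> H" and g: "g \<in> H"
  show "orbit_mean_ip T ip g f = cnj (orbit_mean_ip T ip f g)"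
    using invariant_mean_linear[OF bounded_orbit_ip[OF f g] bounded_linear_cnj]
    by (simp add: orbit_mean_ip_def inner_product_on_commute[OF inner_product T_in_H[OF f] T_in_H[OF g]])
next
  fix f assume f: "f \<in> H" and "f \<noteq> (\<lambda>\<phi>. 0)"
  then have "0 < (ip_norm ip f / C)\<^sup>2"
    using inner_product_on_pos[OF inner_product f] C_pos by (simp add: ip_norm_def)
  also have "\<dots> \<le> Re (orbit_mean_ip T ip f f)"
    unfolding orbit_mean_ip_def by (intro invariant_mean_Re_ge bounded_orbit_ip Re_ip_T_bounds f)
  finally show "0 < Re (orbit_mean_ip T ip f f)" .
qed

lemma ip_norm_orbit_mean_ip_bounds:
  assumes f: "f \<in> H"
  shows "ip_norm ip f / C \<le> ip_norm (orbit_mean_ip T ip) f"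
    and "ip_norm (orbit_mean_ip T ip) f \<le> C * ip_norm ip f"
proof -
  have "(ip_norm ip f / C)\<^sup>2 \<le> Re (orbit_mean_ip T ip f f)"
    "Re (orbit_mean_ip T ip f f) \<le> (C * ip_norm ip f)\<^sup>2"
    unfolding orbit_mean_ip_def
    by (intro invariant_mean_Re_ge invariant_mean_Re_le bounded_orbit_ip Re_ip_T_bounds f)+
  moreover have "0 \<le> ip_norm ip f"
    by (rule ip_norm_nonneg[OF inner_product zero_in_H f])
  ultimately show "ip_norm ip f / C \<le> ip_norm (orbit_mean_ip T ip) f"
    "ip_norm (orbit_mean_ip T ip) f \<le> C * ip_norm ip f"
    unfolding ip_norm_def[of "orbit_mean_ip T ip"] using C_pos
    by (auto intro: real_le_rsqrt real_le_lsqrt)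
qed

lemma ip_norm_orbit_mean_ip_T:
  assumes f: "f \<in> H"
  shows "ip_norm (orbit_mean_ip T ip) (T w f) = ip_norm (orbit_mean_ip T ip) f"
proof -
  have "ip (T z (T w f)) (T z (T w f)) = ip (T (z + w) f) (T (z + w) f)" for z
    unfolding T_compose[OF f]
    by (intro inner_product_on_unimodular_scale[OF inner_product] T_in_H scale_in_H f norm_\<sigma>)
  then have "orbit_mean_ip T ip (T w f) (T w f) = invariant_mean (\<lambda>z. ip (T (z + w) f) (T (z + w) f))"
    by (simp add: orbit_mean_ip_def)
  also have "\<dots> = orbit_mean_ip T ip f f"
    unfolding orbit_mean_ip_def by (rule invariant_mean_shift[OF bounded_orbit_ip[OF f f]])
  finally show ?thesis
    by (simp add: ip_norm_def)
qed

end

theorem lemma2p2: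
  fixes H :: "('d::finite) distr set"
    and ip :: "'d distr \<Rightarrow> 'd distr \<Rightarrow> complex"
    and C0 :: real
  assumes "hilbert_space_on H ip"
    and "H \<noteq> {(\<lambda>\<phi>. 0)}"
    and "cont_embedded_S' H ip"
    and "C0 \<ge> 1"
    and "\<forall>f\<in>H. \<forall>x \<xi>. tf_shift x \<xi> f \<in> H \<and>
            ip_norm ip (tf_shift x \<xi> f) \<le> C0 * ip_norm ip f"
  shows "\<exists>ip'. inner_product_on H ip' \<and>
           (\<exists>a b. 0 < a \<and> 0 < b \<and>
              (\<forall>f\<in>H. a * ip_norm ip f \<le> ip_norm ip' f \<and> ip_norm ip' f \<le> b * ip_norm ip f)) \<and>
           (\<forall>f\<in>H. \<forall>x \<xi>. ip_norm ip' (tf_shift x \<xi> f) = ip_norm ip' f)"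
proof -
  have "(\<lambda>\<phi>. 0) \<in> H" "\<And>f g. f \<in> H \<Longrightarrow> g \<in> H \<Longrightarrow> (\<lambda>\<phi>. f \<phi> + g \<phi>) \<in> H"
    "\<And>c f. f \<in> H \<Longrightarrow> (\<lambda>\<phi>. c * f \<phi>) \<in> H" "inner_product_on H ip"
    using assms(1) unfolding hilbert_space_on_def by blast+
  moreover have "\<And>f. f \<in> H \<Longrightarrow> tempered f"
    using assms(3) by (simp add: cont_embedded_S'_def)
  ultimately interpret bounded_projective_representation H ip "\<lambda>z. tf_shift (fst z) (snd z)"
      "\<lambda>z w. exp (- (\<i> * complex_of_real (inner (fst z) (snd w))))" C0
    using assms(4,5)
    by unfold_locales (auto simp: tf_shift_add tf_shift_scale tf_shift_zero tf_shift_tf_shift)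
  show ?thesis
  proof (intro exI conjI)
    show "inner_product_on H (orbit_mean_ip (\<lambda>z. tf_shift (fst z) (snd z)) ip)"
      by (rule inner_product_on_orbit_mean_ip)
    show "0 < 1 / C0" "0 < C0"
      using assms(4) by simp_all
    show "\<forall>f\<in>H. 1 / C0 * ip_norm ip f \<le> ip_norm (orbit_mean_ip (\<lambda>z. tf_shift (fst z) (snd z)) ip) f \<and>
        ip_norm (orbit_mean_ip (\<lambda>z. tf_shift (fst z) (snd z)) ip) f \<le> C0 * ip_norm ip f"
      using ip_norm_orbit_mean_ip_bounds by simp
    show "\<forall>f\<in>H. \<forall>x \<xi>. ip_norm (orbit_mean_ip (\<lambda>z. tf_shift (fst z) (snd z)) ip) (tf_shift x \<xi> f)
        = ip_norm (orbit_mean_ip (\<lambda>z. tf_shift (fst z) (snd z)) ip) f"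
      using ip_norm_orbit_mean_ip_T[where w = "(x, \<xi>)" for x \<xi>] by simp
  qed
qed

end
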